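(* Let $P$ denote the set of prime numbers, and let $Q \subseteq P$ be a random subset in which each prime $p$ is included independently with probability $\Pr(p \in Q) = 1/2$. Define the completely multiplicative function $\lambda_Q : \mathbb{N} \to \{-1,1\}$ by $\lambda_Q(p) = -1$ if $p \in Q$, $\lambda_Q(p) = 1$ if $p \in P \setminus Q$, and $\lambda_Q(p_1^{e_1}\cdots p_k^{e_k}) = \lambda_Q(p_1)^{e_1}\cdots\lambda_Q(p_k)^{e_k}$ (with $\lambda_Q(1)=1$). Let $A_Q = \{ n \in \mathbb{N} : \lambda_Q(n) = -1\}$. Then, with probability $1$ (i.e. for almost every $Q$), the set $A_Q$ is normal.
   Context: $\mathbb{N} = \{1,2,3,\dots\}$. An infinite binary sequence $(\lambda_i)_{i \ge 1}$ is called normal if every finite binary word $\omega$ of length $|\omega|$ occurs in the sequence with asymptotic frequency $2^{-|\omega|}$, i.e. the number of $i \le N$ with $(\lambda_i,\dots,\lambda_{i+|\omega|-1}) = \omega$, divided by $N$, tends to $2^{-|\omega|}$ as $N \to \infty$. A set $B \subseteq \mathbb{N}$ is called normal if its indicator sequence ($\lambda_i = 1$ iff $i \in B$) is normal. *)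

theory Defs
  imports "HOL-Probability.Probability" "HOL-Computational_Algebra.Primes"
begin

definition lambdaQ :: "nat set \<Rightarrow> nat \<Rightarrow> int" where
  "lambdaQ Q n = (\<Prod>p\<in>prime_factors n. (if p \<in> Q then -1 else 1) ^ multiplicity p n)"

definition AQ :: "nat set \<Rightarrow> nat set" where
  "AQ Q = {n. n \<ge> 1 \<and> lambdaQ Q n = -1}"

definition normal_seq :: "(nat \<Rightarrow> bool) \<Rightarrow> bool" where
  "normal_seq x \<longleftrightarrow> (\<forall>w :: bool list.
     (\<lambda>N. real (card {i \<in> {1..N}. \<forall>j < length w. x (i + j) = w ! j}) / real N)
       \<longlonglongrightarrow> (1/2) ^ length w)"

definition normal_set :: "nat set \<Rightarrow> bool" where
  "normal_set B \<longleftrightarrow> normal_seq (\<lambda>i. i \<in> B)"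

definition coin_space :: "(nat \<Rightarrow> bool) measure" where
  "coin_space = PiM UNIV (\<lambda>_::nat. measure_pmf (bernoulli_pmf (1/2)))"

definition randQ :: "(nat \<Rightarrow> bool) \<Rightarrow> nat set" where
  "randQ \<omega> = {p. prime p \<and> \<omega> p}"

end

(*
  A word w occurs at position i exactly when the product over j < |w| of
  (1 + s_j lambda(i + j)) / 2 equals 1, where s_j = -1 or 1 according to the j-th letter. Expanding
  this product, normality of A_Q reduces to the vanishing of the correlation averages
  (1/N) sum_{i <= N} lambda(prod_{j in T} (i + j)) for every nonempty finite T.

  Flipping the coin of a prime with odd exponent in n negates lambda(n) and preserves the
  measure, so E lambda(n) is 1 if n is a square and 0 otherwise. By complete multiplicativity the
  second moment of the correlation sum therefore counts the pairs i', i <= N for which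
  prod (i' + j) * prod (i + j) is a square. For fixed i', a prime p >= max T divides at most one
  factor i + j, so the squarefree part of i + j_0 is supported on the prime factors of
  c = prod (i' + j) together with the primes below max T. Since i + j_0 is determined by that
  support and by its square part, which is at most sqrt N, and since 2^omega(c) = O(c^epsilon),
  there are O(N^(3/4)) such i. Hence the mean square of the averages is
  O(N^(-1/4)), which is summable along N = m^8, so the averages tend to 0 almost surely along
  that subsequence, and, the terms being bounded, along all N.
*)

theory Submission
  imports Defs "HOL-Computational_Algebra.Squarefree" "HOL-Computational_Algebra.Nth_Powers"
begin

section \<open>Squarefree parts of shifted products\<close>

lemma prime_factors_squarefree_part:
  "prime_factors (squarefree_part n) = {p. prime p \<and> odd (multiplicity p n)}"
  by (auto simp: prime_factors_multiplicity prime_multiplicity_squarefree_part odd_iff_mod_2_eq_one)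

lemma squarefree_part_eqI:
  fixes m n :: nat
  assumes "prime_factors (squarefree_part m) = prime_factors (squarefree_part n)"
  shows "squarefree_part m = squarefree_part n"
proof (rule multiplicity_eq_nat)
  fix p :: nat assume "prime p"
  with assms have "odd (multiplicity p m) \<longleftrightarrow> odd (multiplicity p n)"
    by (auto simp: prime_factors_squarefree_part set_eq_iff)
  with \<open>prime p\<close> show "multiplicity p (squarefree_part m) = multiplicity p (squarefree_part n)"
    by (simp add: prime_multiplicity_squarefree_part odd_iff_mod_2_eq_one) presburger
qed (auto intro: gr0I)

(* A positive n is determined by the prime support of its squarefree part and by its square
   part, which is at most the square root of n. *)

lemma card_squarefree_part_factors_subset_le:
  fixes F :: "nat set"
  assumes "finite F"
  shows "real (card {n \<in> {1..M}. prime_factors (squarefree_part n) \<subseteq> F})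
           \<le> 2 ^ card F * (sqrt (real M) + 1)"
proof -
  let ?S = "{n \<in> {1..M}. prime_factors (squarefree_part n) \<subseteq> F}"
  let ?r = "nth_root_nat 2 M"
  have "inj_on (\<lambda>n. (prime_factors (squarefree_part n), square_part n)) ?S"
    by (auto intro!: inj_onI squarefree_decomposition_unique squarefree_part_eqI)
  moreover have "(\<lambda>n. (prime_factors (squarefree_part n), square_part n)) ` ?S \<subseteq> Pow F \<times> {..?r}"
  proof (rule image_subsetI)
    fix n assume "n \<in> ?S"
    then have n: "1 \<le> n" "n \<le> M" "prime_factors (squarefree_part n) \<subseteq> F" by auto
    have "square_part n ^ 2 \<le> n"
      using n by (intro dvd_imp_le) auto
    then have "square_part n \<le> ?r"
      using n by (intro nth_root_nat_ge) auto
    with n show "(prime_factors (squarefree_part n), square_part n) \<in> Pow F \<times> {..?r}" by auto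
  qed
  ultimately have "card ?S \<le> card (Pow F \<times> {..?r})"
    using assms by (intro card_inj_on_le) auto
  also have "\<dots> = 2 ^ card F * (?r + 1)"
    using assms by (simp add: card_cartesian_product card_Pow)
  finally have card_le: "card ?S \<le> 2 ^ card F * (?r + 1)" .
  have "?r ^ 2 \<le> M"
    by (rule nth_root_nat_power_le) simp
  then have r_le: "real ?r \<le> sqrt (real M)"
    by (intro real_le_rsqrt) (simp flip: of_nat_power)
  have "real (card ?S) \<le> real (2 ^ card F * (?r + 1))"
    using card_le by (simp only: of_nat_le_iff)
  also have "\<dots> = 2 ^ card F * (real ?r + 1)"
    by (simp add: algebra_simps)
  also have "\<dots> \<le> 2 ^ card F * (sqrt (real M) + 1)"
    using r_le by (intro mult_left_mono) auto
  finally show ?thesis .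
qed

lemma dvd_two_shifts_imp_le_diff:
  fixes p i j j' :: nat
  assumes "p dvd i + j" "p dvd i + j'" "j < j'"
  shows "p \<le> j' - j"
proof -
  have "p dvd (i + j') - (i + j)"
    using assms by (intro dvd_diff_nat)
  with assms(3) show ?thesis
    by (intro dvd_imp_le) auto
qed

(* A prime p >= k divides at most one of the factors i + j, so the parity of its exponent in
   the square is its parity in c plus its parity in i + j0. *)

lemma squarefree_part_factors_subset_if_square:
  fixes c i k j\<^sub>0 :: nat
  assumes "c > 0" "i > 0" "j\<^sub>0 \<in> T" "T \<subseteq> {..<k}"
    and square: "is_square (c * (\<Prod>j\<in>T. i + j))"
  shows "prime_factors (squarefree_part (i + j\<^sub>0)) \<subseteq> prime_factors c \<union> {..<k}"
proof
  fix p assume "p \<in> prime_factors (squarefree_part (i + j\<^sub>0))"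
  then have p: "prime p" "odd (multiplicity p (i + j\<^sub>0))"
    by (auto simp: prime_factors_squarefree_part)
  show "p \<in> prime_factors c \<union> {..<k}"
  proof (cases "p < k")
    case False
    have "finite T"
      using assms(4) finite_subset by blast
    have "p dvd i + j\<^sub>0"
      using p(2) not_dvd_imp_multiplicity_0 by fastforce
    then have others: "multiplicity p (i + j) = 0" if "j \<in> T - {j\<^sub>0}" for j
      using that False assms(3,4) dvd_two_shifts_imp_le_diff[of p i j j\<^sub>0]
        dvd_two_shifts_imp_le_diff[of p i j\<^sub>0 j]
      by (intro not_dvd_imp_multiplicity_0) (auto simp: linorder_neq_iff)
    have "multiplicity p (c * (\<Prod>j\<in>T. i + j))
            = multiplicity p c + (\<Sum>j\<in>T. multiplicity p (i + j))"
      using p assms \<open>finite T\<close> by (simp add: prime_elem_multiplicity_mult_distrib)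
        (intro prime_elem_multiplicity_prod_distrib, auto)
    also have "(\<Sum>j\<in>T. multiplicity p (i + j)) = multiplicity p (i + j\<^sub>0)"
      using assms(3) \<open>finite T\<close> others by (simp add: sum.remove)
    finally have "odd (multiplicity p c)"
      using square p by (auto simp: is_nth_power_conv_multiplicity_nat)
    with p show ?thesis
      by (auto simp: prime_factors_multiplicity intro: gr0I)
  qed simp
qed

lemma card_square_shifted_products_le:
  fixes c k :: nat
  assumes "c > 0" "j\<^sub>0 \<in> T" "T \<subseteq> {..<k}"
  shows "real (card {i \<in> {1..N}. is_square (c * (\<Prod>j\<in>T. i + j))})
           \<le> 2 ^ (card (prime_factors c) + k) * (sqrt (real (N + k)) + 1)"
proof -
  define F where "F = prime_factors c \<union> {..<k}"
  have F: "finite F" "card F \<le> card (prime_factors c) + k"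
    unfolding F_def using card_Un_le[of "prime_factors c" "{..<k}"] by auto
  let ?S = "{i \<in> {1..N}. is_square (c * (\<Prod>j\<in>T. i + j))}"
  have "(\<lambda>i. i + j\<^sub>0) ` ?S \<subseteq> {n \<in> {1..N + k}. prime_factors (squarefree_part n) \<subseteq> F}"
  proof (rule image_subsetI)
    fix i assume i: "i \<in> ?S"
    have "j\<^sub>0 < k"
      using assms by auto
    moreover have "prime_factors (squarefree_part (i + j\<^sub>0)) \<subseteq> F"
      unfolding F_def using i assms
      by (intro squarefree_part_factors_subset_if_square) auto
    ultimately show "i + j\<^sub>0 \<in> {n \<in> {1..N + k}. prime_factors (squarefree_part n) \<subseteq> F}"
      using i by auto
  qed
  then have "card ?S \<le> card {n \<in> {1..N + k}. prime_factors (squarefree_part n) \<subseteq> F}"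
    by (intro card_inj_on_le[where f = "\<lambda>i. i + j\<^sub>0"]) (auto intro: inj_onI)
  then have "real (card ?S) \<le> 2 ^ card F * (sqrt (real (N + k)) + 1)"
    using card_squarefree_part_factors_subset_le[OF F(1), of "N + k"] by linarith
  also have "\<dots> \<le> 2 ^ (card (prime_factors c) + k) * (sqrt (real (N + k)) + 1)"
    using F(2) by (intro mult_right_mono power_increasing) auto
  finally show ?thesis .
qed

(* At most m prime factors of c lie below m, and each of the others contributes at least m
   to c. *)

lemma power_card_prime_factors_le:
  fixes c m :: nat
  assumes "c > 0"
  shows "m ^ card (prime_factors c) \<le> m ^ m * c"
proof -
  define S where "S = {p \<in> prime_factors c. p < m}"
  define L where "L = {p \<in> prime_factors c. m \<le> p}"
  have "prime_factors c = S \<union> L" "S \<inter> L = {}"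
    unfolding S_def L_def by auto
  then have card_eq: "card (prime_factors c) = card S + card L"
    by (metis card_Un_disjoint finite_Un finite_set_mset)
  have "card S \<le> m"
    using card_mono[of "{..<m}" S] by (auto simp: S_def)
  have "m ^ card L = (\<Prod>p\<in>L. m)"
    by simp
  also have "\<dots> \<le> (\<Prod>p\<in>L. p)"
    by (intro prod_mono) (auto simp: L_def)
  also have "\<dots> \<le> c"
  proof (rule dvd_imp_le)
    have "(\<Prod>p\<in>L. p) dvd (\<Prod>p\<in>L. p ^ multiplicity p c)"
      by (intro prod_dvd_prod) (auto simp: L_def prime_factors_multiplicity intro!: dvd_power)
    also have "\<dots> dvd (\<Prod>p\<in>prime_factors c. p ^ multiplicity p c)"
      by (intro prod_dvd_prod_subset) (auto simp: L_def)
    also have "\<dots> = c"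
      using prime_factorization_nat[OF assms] by simp
    finally show "(\<Prod>p\<in>L. p) dvd c" .
  qed (use assms in simp)
  finally have "m ^ card L \<le> c" .
  moreover have "m ^ card S \<le> m ^ m"
    using \<open>card S \<le> m\<close> by (cases "m = 0") (auto intro: power_increasing)
  ultimately show ?thesis
    unfolding card_eq power_add by (intro mult_mono) auto
qed

lemma two_pow_card_prime_factors_le:
  fixes c r :: nat
  assumes "c > 0" "r > 0"
  shows "2 ^ card (prime_factors c) \<le> 2 ^ 2 ^ r * real c powr (1 / r)"
proof -
  let ?w = "card (prime_factors c)"
  have swap: "((2::nat) ^ a) ^ b = (2 ^ b) ^ a" for a b :: nat
    by (simp only: power_mult [symmetric] mult.commute)
  have "(2 ^ ?w) ^ r \<le> (2 ^ 2 ^ r) ^ r * c"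
    using power_card_prime_factors_le[OF assms(1), of "2 ^ r"] by (simp only: swap)
  then have "real ((2 ^ ?w) ^ r) \<le> real ((2 ^ 2 ^ r) ^ r * c)"
    by (simp only: of_nat_le_iff)
  then have "(2 ^ ?w) ^ r \<le> (2 ^ 2 ^ r) ^ r * real c"
    by (simp only: of_nat_mult of_nat_power of_nat_numeral)
  then have "root r ((2 ^ ?w) ^ r) \<le> root r ((2 ^ 2 ^ r) ^ r * real c)"
    by (rule real_root_le_mono[OF assms(2)])
  then have "2 ^ ?w \<le> 2 ^ 2 ^ r * root r (real c)"
    using assms(2) by (simp only: real_root_mult real_root_power_cancel zero_le_power zero_le_numeral)
  with assms show ?thesis
    by (simp add: root_powr_inverse)
qed

lemma card_square_shifted_products_le_powr:
  fixes k N i' :: nat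
  assumes "j\<^sub>0 \<in> T" "T \<subseteq> {..<k}" "1 \<le> i'" "i' \<le> N"
  shows "real (card {i \<in> {1..N}. is_square ((\<Prod>j\<in>T. i' + j) * (\<Prod>j\<in>T. i + j))})
           \<le> 2 ^ (k + 1) * 2 ^ 2 ^ (4 * k) * real (k + 1) * real N powr (3 / 4)"
proof -
  define c where "c = (\<Prod>j\<in>T. i' + j)"
  define M where "M = real ((k + 1) * N)"
  have k: "k \<ge> 1" and N: "N \<ge> 1"
    using assms by auto
  have "c > 0"
    unfolding c_def using assms by (intro prod_pos) auto
  have "real k * 1 \<le> real k * real N"
    using N by (intro mult_left_mono) auto
  then have M: "M \<ge> 1" "real (N + k) \<le> M"
    unfolding M_def using N by (simp_all add: algebra_simps)
  have "real c \<le> (\<Prod>j\<in>T. M)"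
    unfolding c_def of_nat_prod using assms M
    by (intro prod_mono) (auto simp: subset_eq order_trans[OF _ M(2)])
  also have "\<dots> \<le> M ^ k"
    using M assms card_mono[OF _ assms(2)] by (simp add: power_increasing)
  finally have "real c powr (1 / real (4 * k)) \<le> (M ^ k) powr (1 / real (4 * k))"
    by (intro powr_mono2) auto
  also have "\<dots> = M powr (1 / 4)"
    using M k by (simp add: powr_realpow [symmetric] powr_powr)
  finally have "2 ^ 2 ^ (4 * k) * real c powr (1 / real (4 * k)) \<le> 2 ^ 2 ^ (4 * k) * M powr (1 / 4)"
    by (rule mult_left_mono) simp
  with two_pow_card_prime_factors_le[OF \<open>c > 0\<close>, of "4 * k"] k
  have omega: "2 ^ card (prime_factors c) \<le> 2 ^ 2 ^ (4 * k) * M powr (1 / 4)"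
    by (auto intro: order_trans)
  have "sqrt (real (N + k)) \<le> sqrt M" "1 \<le> sqrt M" "M powr (1 / 2) = sqrt M"
    using M by (auto simp: powr_half_sqrt)
  then have sqrt: "sqrt (real (N + k)) + 1 \<le> 2 * M powr (1 / 2)"
    by linarith
  have M_powr: "M powr (3 / 4) \<le> real (k + 1) * real N powr (3 / 4)"
    unfolding M_def of_nat_mult using powr_mono[of "3 / 4" 1 "real (k + 1)"]
    by (subst powr_mult) (auto intro!: mult_right_mono)
  have "real (card {i \<in> {1..N}. is_square (c * (\<Prod>j\<in>T. i + j))})
          \<le> 2 ^ k * (2 ^ card (prime_factors c) * (sqrt (real (N + k)) + 1))"
    using card_square_shifted_products_le[OF \<open>c > 0\<close> assms(1,2), of N]
    by (simp add: power_add mult_ac)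
  also have "\<dots> \<le> 2 ^ k * ((2 ^ 2 ^ (4 * k) * M powr (1 / 4)) * (2 * M powr (1 / 2)))"
    using omega sqrt by (intro mult_left_mono mult_mono) auto
  also have "\<dots> = 2 ^ (k + 1) * 2 ^ 2 ^ (4 * k) * M powr (3 / 4)"
    using M by (simp add: powr_add [symmetric])
  also have "\<dots> \<le> 2 ^ (k + 1) * 2 ^ 2 ^ (4 * k) * (real (k + 1) * real N powr (3 / 4))"
    using M_powr by (intro mult_left_mono) simp_all
  finally show ?thesis
    unfolding c_def by (simp only: mult.assoc)
qed

section \<open>The completely multiplicative function lambda_Q\<close>

lemma lambdaQ_eq_prod_superset:
  assumes "finite S" "prime_factors n \<subseteq> S" "\<And>p. p \<in> S \<Longrightarrow> prime p"
  shows "lambdaQ Q n = (\<Prod>p\<in>S. (if p \<in> Q then -1 else 1) ^ multiplicity p n)"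
  unfolding lambdaQ_def
proof (rule prod.mono_neutral_left[OF assms(1,2)], intro ballI)
  fix p assume "p \<in> S - prime_factors n"
  then have "multiplicity p n = 0"
    using assms(3) by (cases "n = 0") (auto simp: prime_factors_multiplicity)
  then show "(if p \<in> Q then -1 else 1) ^ multiplicity p n = 1"
    by simp
qed

lemma lambdaQ_mult:
  assumes "a > 0" "b > 0"
  shows "lambdaQ Q (a * b) = lambdaQ Q a * lambdaQ Q b"
proof -
  let ?S = "prime_factors a \<union> prime_factors b"
  have S: "finite ?S" "\<And>p. p \<in> ?S \<Longrightarrow> prime p"
    by (auto simp: in_prime_factors_iff)
  have "prime_factors (a * b) = ?S"
    using assms by (simp add: prime_factors_product)
  then have "lambdaQ Q (a * b)
               = (\<Prod>p\<in>?S. (if p \<in> Q then -1 else 1) ^ (multiplicity p a + multiplicity p b))"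
    using assms S by (subst lambdaQ_eq_prod_superset[of ?S])
      (auto intro!: prod.cong simp: prime_elem_multiplicity_mult_distrib)
  also have "\<dots> = lambdaQ Q a * lambdaQ Q b"
    using S by (subst (1 2) lambdaQ_eq_prod_superset[of ?S]) (auto simp: power_add prod.distrib)
  finally show ?thesis .
qed

lemma lambdaQ_prod:
  "(\<And>j. j \<in> T \<Longrightarrow> f j > 0) \<Longrightarrow> lambdaQ Q (\<Prod>j\<in>T. f j) = (\<Prod>j\<in>T. lambdaQ Q (f j))"
proof (induction T rule: infinite_finite_induct)
  case (insert j T)
  then show ?case
    by (simp add: lambdaQ_mult prod_pos)
qed (simp_all add: lambdaQ_def)

lemma abs_lambdaQ [simp]: "\<bar>lambdaQ Q n\<bar> = 1"
  unfolding lambdaQ_def abs_prod by (intro prod.neutral) (simp add: power_abs)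

lemma lambdaQ_square:
  assumes "is_square n"
  shows "lambdaQ Q n = 1"
  unfolding lambdaQ_def using assms
  by (intro prod.neutral ballI)
    (auto simp: is_nth_power_conv_multiplicity_nat in_prime_factors_iff elim!: evenE)

section \<open>The random sign lambda on the coin space\<close>

lemma prob_space_coin_space: "prob_space coin_space"
  unfolding coin_space_def by (intro prob_space_PiM prob_space_measure_pmf)

lemma space_coin_space [simp]: "space coin_space = UNIV"
  unfolding coin_space_def by (simp add: space_PiM)

definition flip_coin :: "nat \<Rightarrow> (nat \<Rightarrow> bool) \<Rightarrow> nat \<Rightarrow> bool" where
  "flip_coin p \<omega> = fun_upd \<omega> p (\<not> \<omega> p)"

lemma measurable_flip_coin [measurable]: "flip_coin p \<in> coin_space \<rightarrow>\<^sub>M coin_space"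
  unfolding coin_space_def flip_coin_def
  by (rule measurable_PiM_single') (auto simp: space_PiM)

lemma map_pmf_Not_bernoulli_half: "map_pmf Not (bernoulli_pmf (1 / 2)) = bernoulli_pmf (1 / 2)"
proof (rule pmf_eqI)
  fix b :: bool
  have "Not -` {b} = {\<not> b}"
    by auto
  then show "pmf (map_pmf Not (bernoulli_pmf (1 / 2))) b = pmf (bernoulli_pmf (1 / 2)) b"
    by (cases b) (simp_all add: pmf_map measure_pmf_single)
qed

lemma distr_flip_coin: "distr coin_space coin_space (flip_coin p) = coin_space"
proof -
  let ?B = "measure_pmf (bernoulli_pmf (1 / 2))"
  interpret product_prob_space "\<lambda>_::nat. ?B" UNIV
    by unfold_locales
  show ?thesis
    unfolding coin_space_def
  proof (rule PiM_eq)
    fix J :: "nat set" and F assume J: "finite J" "J \<subseteq> UNIV"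
    define F' where "F' j = (if j = p then Not -` F j else F j)" for j
    have "emeasure ?B (F' j) = emeasure ?B (F j)" for j
      using emeasure_map_pmf[of Not "bernoulli_pmf (1 / 2)" "F j"]
      by (simp add: F'_def map_pmf_Not_bernoulli_half)
    moreover have flipped: "flip_coin p x j \<in> F j \<longleftrightarrow> x j \<in> F' j" for x j
      by (simp add: flip_coin_def F'_def)
    moreover have "flip_coin p -` prod_emb UNIV (\<lambda>_. ?B) J (Pi\<^sub>E J F) \<inter> space (PiM UNIV (\<lambda>_. ?B))
                   = prod_emb UNIV (\<lambda>_. ?B) J (Pi\<^sub>E J F')"
      by (auto simp: prod_emb_def space_PiM PiE_iff flipped)
    ultimately show "emeasure (distr (PiM UNIV (\<lambda>_. ?B)) (PiM UNIV (\<lambda>_. ?B)) (flip_coin p))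
                       (prod_emb UNIV (\<lambda>_. ?B) J (Pi\<^sub>E J F)) = (\<Prod>j\<in>J. emeasure ?B (F j))"
      using J measurable_flip_coin[of p, unfolded coin_space_def]
      by (simp add: emeasure_distr sets_PiM_I emeasure_PiM_emb)
  qed (rule sets_distr)
qed

definition lambda_coin :: "(nat \<Rightarrow> bool) \<Rightarrow> nat \<Rightarrow> real" where
  "lambda_coin \<omega> n = of_int (lambdaQ (randQ \<omega>) n)"

lemma lambda_coin_eq:
  "lambda_coin \<omega> n = (\<Prod>p\<in>prime_factors n. (if \<omega> p then -1 else 1) ^ multiplicity p n)"
  unfolding lambda_coin_def lambdaQ_def randQ_def of_int_prod
  by (intro prod.cong) (auto simp: in_prime_factors_iff)

lemma measurable_coin [measurable]: "(\<lambda>\<omega>. \<omega> p) \<in> coin_space \<rightarrow>\<^sub>M count_space UNIV"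
proof -
  have "(\<lambda>\<omega>. \<omega> p) \<in> coin_space \<rightarrow>\<^sub>M measure_pmf (bernoulli_pmf (1 / 2))"
    unfolding coin_space_def by (rule measurable_component_singleton) simp
  then show ?thesis
    by (simp cong: measurable_cong_sets add: sets_measure_pmf_count_space)
qed

lemma measurable_lambda_coin [measurable]: "(\<lambda>\<omega>. lambda_coin \<omega> n) \<in> borel_measurable coin_space"
  unfolding lambda_coin_eq by measurable

lemma abs_lambda_coin [simp]: "\<bar>lambda_coin \<omega> n\<bar> = 1"
  unfolding lambda_coin_def by (metis abs_lambdaQ of_int_1 of_int_abs)

lemma lambda_coin_mult: "a > 0 \<Longrightarrow> b > 0 \<Longrightarrow> lambda_coin \<omega> (a * b) = lambda_coin \<omega> a * lambda_coin \<omega> b"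
  unfolding lambda_coin_def by (simp add: lambdaQ_mult)

lemma lambda_coin_flip_coin:
  assumes "prime p" "odd (multiplicity p n)"
  shows "lambda_coin (flip_coin p \<omega>) n = - lambda_coin \<omega> n"
proof -
  let ?f = "\<lambda>\<omega> q. (if \<omega> q then -1 else 1 :: real) ^ multiplicity q n"
  have p: "p \<in> prime_factors n"
    using assms by (auto simp: prime_factors_multiplicity intro: gr0I)
  have "lambda_coin (flip_coin p \<omega>) n = ?f (flip_coin p \<omega>) p * (\<Prod>q\<in>prime_factors n - {p}. ?f \<omega> q)"
    unfolding lambda_coin_eq using p by (simp add: prod.remove flip_coin_def)
  also have "?f (flip_coin p \<omega>) p = - ?f \<omega> p"
    using assms(2) by (simp add: flip_coin_def)
  finally show ?thesis
    unfolding lambda_coin_eq using p by (simp add: prod.remove)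
qed

lemma prod_sign_AQ_eq_lambda_coin:
  assumes "i \<ge> 1"
  shows "(\<Prod>j\<in>T. if i + j \<in> AQ (randQ \<omega>) then -1 else 1) = lambda_coin \<omega> (\<Prod>j\<in>T. i + j)"
proof -
  have "(if n \<in> AQ (randQ \<omega>) then -1 else 1) = lambda_coin \<omega> n" if "n \<ge> 1" for n
    using that abs_lambdaQ[of "randQ \<omega>" n]
    by (auto simp: AQ_def lambda_coin_def abs_if split: if_splits)
  with assms show ?thesis
    by (simp add: lambda_coin_def lambdaQ_prod)
qed

lemma integrable_lambda_coin [simp]: "integrable coin_space (\<lambda>\<omega>. lambda_coin \<omega> n)"
proof -
  interpret prob_space coin_space
    by (rule prob_space_coin_space)
  show ?thesis
    by (rule integrable_const_bound[where B = 1]) auto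
qed

lemma expectation_lambda_coin:
  "integral\<^sup>L coin_space (\<lambda>\<omega>. lambda_coin \<omega> n) = (if is_square n then 1 else 0)"
proof (cases "is_square n")
  case True
  interpret prob_space coin_space
    by (rule prob_space_coin_space)
  show ?thesis
    using True prob_space by (simp add: lambda_coin_def lambdaQ_square)
next
  case False
  then obtain p where p: "prime p" "odd (multiplicity p n)"
    by (auto simp: is_nth_power_conv_multiplicity_nat)
  have "integral\<^sup>L coin_space (\<lambda>\<omega>. lambda_coin \<omega> n)
          = integral\<^sup>L (distr coin_space coin_space (flip_coin p)) (\<lambda>\<omega>. lambda_coin \<omega> n)"
    by (simp add: distr_flip_coin)
  also have "\<dots> = - integral\<^sup>L coin_space (\<lambda>\<omega>. lambda_coin \<omega> n)"
    by (simp add: integral_distr lambda_coin_flip_coin[OF p])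
  finally show ?thesis
    using False by simp
qed

section \<open>Almost sure vanishing of the correlation averages\<close>

lemma AE_tendsto_zero_if_summable_integral:
  fixes Z :: "nat \<Rightarrow> 'a \<Rightarrow> real"
  assumes integrable: "\<And>m. integrable M (Z m)" and nonneg: "\<And>m x. x \<in> space M \<Longrightarrow> 0 \<le> Z m x"
    and summable: "summable (\<lambda>m. integral\<^sup>L M (Z m))"
  shows "AE x in M. (\<lambda>m. Z m x) \<longlonglongrightarrow> 0"
proof -
  have [measurable]: "Z m \<in> borel_measurable M" for m
    using integrable by auto
  have "(\<integral>\<^sup>+x. (\<Sum>m. ennreal (Z m x)) \<partial>M) = (\<Sum>m. \<integral>\<^sup>+x. ennreal (Z m x) \<partial>M)"
    by (rule nn_integral_suminf) measurable
  also have "\<dots> = (\<Sum>m. ennreal (integral\<^sup>L M (Z m)))"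
    using integrable nonneg by (simp add: nn_integral_eq_integral)
  also have "\<dots> = ennreal (\<Sum>m. integral\<^sup>L M (Z m))"
    using summable nonneg by (intro suminf_ennreal2) (auto intro: integral_nonneg_AE)
  finally have "AE x in M. (\<Sum>m. ennreal (Z m x)) \<noteq> \<infinity>"
    by (intro nn_integral_noteq_infinite) auto
  then show ?thesis
  proof (rule AE_mp, intro AE_I2 impI)
    fix x assume "x \<in> space M" "(\<Sum>m. ennreal (Z m x)) \<noteq> \<infinity>"
    then have "summable (\<lambda>m. Z m x)"
      using nonneg by (intro summable_suminf_not_top) auto
    then show "(\<lambda>m. Z m x) \<longlonglongrightarrow> 0"
      by (rule summable_LIMSEQ_zero)
  qed
qed

definition corr_sum :: "nat set \<Rightarrow> nat \<Rightarrow> (nat \<Rightarrow> bool) \<Rightarrow> real" where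
  "corr_sum T N \<omega> = (\<Sum>i = 1..N. lambda_coin \<omega> (\<Prod>j\<in>T. i + j))"

lemma measurable_corr_sum [measurable]: "corr_sum T N \<in> borel_measurable coin_space"
  unfolding corr_sum_def by measurable

lemma integrable_corr_sum_sq: "integrable coin_space (\<lambda>\<omega>. (corr_sum T N \<omega>)\<^sup>2)"
proof -
  interpret prob_space coin_space
    by (rule prob_space_coin_space)
  have "\<bar>corr_sum T N \<omega>\<bar> \<le> real N" for \<omega>
    unfolding corr_sum_def using sum_abs[of "\<lambda>i. lambda_coin \<omega> (\<Prod>j\<in>T. i + j)" "{1..N}"]
    by simp
  then have "\<bar>(corr_sum T N \<omega>)\<^sup>2\<bar> \<le> (real N)\<^sup>2" for \<omega>
    using power_mono[OF _ abs_ge_zero, of "corr_sum T N \<omega>" "real N" 2] by simp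
  then show ?thesis
    by (intro integrable_const_bound[where B = "(real N)\<^sup>2"]) auto
qed

lemma expectation_corr_sum_sq:
  "integral\<^sup>L coin_space (\<lambda>\<omega>. (corr_sum T N \<omega>)\<^sup>2)
     = real (\<Sum>i' = 1..N. card {i \<in> {1..N}. is_square ((\<Prod>j\<in>T. i' + j) * (\<Prod>j\<in>T. i + j))})"
proof -
  have "(corr_sum T N \<omega>)\<^sup>2
          = (\<Sum>i' = 1..N. \<Sum>i = 1..N. lambda_coin \<omega> ((\<Prod>j\<in>T. i' + j) * (\<Prod>j\<in>T. i + j)))" for \<omega>
    unfolding corr_sum_def power2_eq_square sum_product
    by (intro sum.cong refl) (simp add: lambda_coin_mult prod_pos)
  then have "integral\<^sup>L coin_space (\<lambda>\<omega>. (corr_sum T N \<omega>)\<^sup>2)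
               = (\<Sum>i' = 1..N. \<Sum>i = 1..N. if is_square ((\<Prod>j\<in>T. i' + j) * (\<Prod>j\<in>T. i + j)) then 1 else 0)"
    by (simp add: expectation_lambda_coin)
  then show ?thesis
    by (simp add: sum.If_cases Int_def conj_commute)
qed

lemma expectation_corr_sum_sq_le:
  assumes "T \<noteq> {}" "T \<subseteq> {..<k}" "N \<ge> 1"
  shows "integral\<^sup>L coin_space (\<lambda>\<omega>. (corr_sum T N \<omega> / N)\<^sup>2)
           \<le> 2 ^ (k + 1) * 2 ^ 2 ^ (4 * k) * real (k + 1) * real N powr (- 1 / 4)"
proof -
  let ?C = "2 ^ (k + 1) * 2 ^ 2 ^ (4 * k) * real (k + 1)"
  obtain j\<^sub>0 where "j\<^sub>0 \<in> T"
    using assms(1) by auto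
  have "integral\<^sup>L coin_space (\<lambda>\<omega>. (corr_sum T N \<omega>)\<^sup>2) \<le> (\<Sum>i' = 1..N. ?C * real N powr (3 / 4))"
    unfolding expectation_corr_sum_sq of_nat_sum
    by (intro sum_mono card_square_shifted_products_le_powr[OF \<open>j\<^sub>0 \<in> T\<close> assms(2)]) auto
  also have "\<dots> = ?C * real N powr (- 1 / 4) * (real N)\<^sup>2"
    using assms(3) by (simp add: powr_mult_base power2_eq_square mult_ac)
  finally show ?thesis
    using assms(3) by (simp add: power_divide divide_le_eq)
qed

(* The mean square of the averages is O(N powr (-1/4)), which is summable along the
   subsequence N = (m + 1) ^ 8. *)

lemma AE_corr_sum_power_subsequence:
  assumes "finite T" "T \<noteq> {}"
  shows "AE \<omega> in coin_space. (\<lambda>m. corr_sum T (Suc m ^ 8) \<omega> / real (Suc m ^ 8)) \<longlonglongrightarrow> 0"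
proof -
  define k where "k = Suc (Max T)"
  have T: "T \<subseteq> {..<k}"
    using assms by (auto simp: k_def less_Suc_eq_le)
  let ?C = "2 ^ (k + 1) * 2 ^ 2 ^ (4 * k) * real (k + 1)"
  let ?Z = "\<lambda>m \<omega>. (corr_sum T (Suc m ^ 8) \<omega> / real (Suc m ^ 8))\<^sup>2"
  have "summable (\<lambda>m. real m powr (- 2))"
    by (simp add: summable_real_powr_iff)
  then have "summable (\<lambda>m. real (Suc m) powr (- 2))"
    by (rule summable_Suc_iff [THEN iffD2])
  then have summable: "summable (\<lambda>m. ?C * real (Suc m) powr (- 2))"
    by (rule summable_mult)
  have "norm (integral\<^sup>L coin_space (?Z m)) \<le> ?C * real (Suc m) powr (- 2)" for m
  proof -
    have "real (Suc m ^ 8) = real (Suc m) powr 8"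
      by (simp only: of_nat_power powr_numeral of_nat_0_le_iff)
    then have "real (Suc m ^ 8) powr (- 1 / 4) = real (Suc m) powr (- 2)"
      by (simp only: powr_powr) simp
    moreover have "integral\<^sup>L coin_space (?Z m) \<le> ?C * real (Suc m ^ 8) powr (- 1 / 4)"
      by (rule expectation_corr_sum_sq_le[OF assms(2) T]) simp
    ultimately show ?thesis
      by (simp add: integral_nonneg_AE)
  qed
  then have "summable (\<lambda>m. integral\<^sup>L coin_space (?Z m))"
    by (intro summable_comparison_test'[OF summable, of 0])
  moreover have "integrable coin_space (?Z m)" for m
    unfolding power_divide by (intro integrable_divide integrable_corr_sum_sq)
  ultimately have "AE \<omega> in coin_space. (\<lambda>m. ?Z m \<omega>) \<longlonglongrightarrow> 0"
    by (intro AE_tendsto_zero_if_summable_integral) auto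
  then show ?thesis
  proof (rule eventually_mono)
    fix \<omega> assume "(\<lambda>m. ?Z m \<omega>) \<longlonglongrightarrow> 0"
    then have "(\<lambda>m. \<bar>corr_sum T (Suc m ^ 8) \<omega> / real (Suc m ^ 8)\<bar>) \<longlonglongrightarrow> 0"
      using tendsto_real_sqrt by fastforce
    then show "(\<lambda>m. corr_sum T (Suc m ^ 8) \<omega> / real (Suc m ^ 8)) \<longlonglongrightarrow> 0"
      by (rule tendsto_rabs_zero_cancel)
  qed
qed

lemma abs_average_le_block_average:
  fixes X :: "nat \<Rightarrow> real"
  assumes bound: "\<And>i. \<bar>X i\<bar> \<le> B" and n: "n \<ge> 1" "n ^ d \<le> N" "N < Suc n ^ d"
  shows "\<bar>(\<Sum>i = 1..N. X i) / N\<bar>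
           \<le> \<bar>(\<Sum>i = 1..n ^ d. X i) / n ^ d\<bar> + B * ((real (Suc n) / n) ^ d - 1)"
proof -
  let ?S = "\<Sum>i = 1..n ^ d. X i" and ?R = "\<Sum>i\<in>{n ^ d<..N}. X i"
  have P: "real n ^ d > 0" "real n ^ d \<le> real N" "real N \<le> real (Suc n) ^ d"
    using n by (auto simp del: of_nat_Suc)
  have "{1..N} = {1..n ^ d} \<union> {n ^ d<..N}"
    using n by auto
  then have "(\<Sum>i = 1..N. X i) = ?S + ?R"
    by (simp add: sum.union_disjoint ivl_disj_int)
  have "\<bar>?R\<bar> \<le> (\<Sum>i\<in>{n ^ d<..N}. B)"
    using bound by (intro order_trans[OF sum_abs] sum_mono)
  also have "\<dots> = B * (real N - real n ^ d)"
    using n by simp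
  also have "\<dots> \<le> B * (real (Suc n) ^ d - real n ^ d)"
    using P bound[of 0] by (intro mult_left_mono) auto
  finally have R: "\<bar>?R\<bar> \<le> B * (real (Suc n) ^ d - real n ^ d)" .
  have "\<bar>(\<Sum>i = 1..N. X i) / N\<bar> \<le> \<bar>?S\<bar> / N + \<bar>?R\<bar> / N"
    unfolding \<open>(\<Sum>i = 1..N. X i) = ?S + ?R\<close> abs_divide abs_of_nat add_divide_distrib [symmetric]
    by (intro divide_right_mono abs_triangle_ineq) simp
  also have "\<dots> \<le> \<bar>?S\<bar> / real n ^ d + B * (real (Suc n) ^ d - real n ^ d) / real n ^ d"
    using P R by (intro add_mono divide_left_mono frac_le) auto
  also have "\<dots> = \<bar>?S / n ^ d\<bar> + B * ((real (Suc n) / n) ^ d - 1)"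
    using P by (simp add: field_simps)
  finally show ?thesis .
qed

lemma averages_tendsto_zero_if_power_subsequence:
  fixes X :: "nat \<Rightarrow> real"
  assumes bound: "\<And>i. \<bar>X i\<bar> \<le> B" and "d > 0"
    and sub: "(\<lambda>m. (\<Sum>i = 1..Suc m ^ d. X i) / real (Suc m ^ d)) \<longlonglongrightarrow> 0"
  shows "(\<lambda>N. (\<Sum>i = 1..N. X i) / N) \<longlonglongrightarrow> 0"
proof -
  define h where "h n = \<bar>(\<Sum>i = 1..n ^ d. X i) / n ^ d\<bar> + B * ((real (Suc n) / n) ^ d - 1)" for n
  have "(\<lambda>n. (\<Sum>i = 1..n ^ d. X i) / real (n ^ d)) \<longlonglongrightarrow> 0"
    using sub by (rule filterlim_sequentially_Suc [THEN iffD1])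
  then have "h \<longlonglongrightarrow> \<bar>0\<bar> + B * (1 ^ d - 1)"
    unfolding h_def by (intro tendsto_intros LIMSEQ_Suc_n_over_n) simp
  then have h: "h \<longlonglongrightarrow> 0"
    by simp
  have root: "filterlim (nth_root_nat d) at_top sequentially"
    unfolding filterlim_at_top
    using \<open>d > 0\<close> by (auto intro!: eventually_sequentiallyI nth_root_nat_ge)
  have "\<forall>\<^sub>F N in sequentially. norm ((\<Sum>i = 1..N. X i) / N) \<le> h (nth_root_nat d N)"
  proof (rule eventually_sequentiallyI)
    fix N :: nat assume "N \<ge> 1"
    have "1 \<le> nth_root_nat d N"
      using \<open>d > 0\<close> \<open>N \<ge> 1\<close> by (intro nth_root_nat_ge) auto
    moreover have "\<not> Suc (nth_root_nat d N) ^ d \<le> N"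
      using nth_root_nat_ge[OF \<open>d > 0\<close>, of "Suc (nth_root_nat d N)" N] by auto
    moreover have "nth_root_nat d N ^ d \<le> N"
      using \<open>d > 0\<close> by (rule nth_root_nat_power_le)
    ultimately show "norm ((\<Sum>i = 1..N. X i) / N) \<le> h (nth_root_nat d N)"
      unfolding h_def real_norm_def by (intro abs_average_le_block_average[OF bound]) auto
  qed
  then show ?thesis
    by (rule Lim_null_comparison) (rule filterlim_compose[OF h root])
qed

section \<open>Normality from vanishing correlations\<close>

lemma indicator_all_eq_prod:
  fixes L :: nat
  shows "(if \<forall>j<L. P j then 1 else 0 :: real) = (\<Prod>j<L. if P j then 1 else 0)"
  by (induction L) (auto simp: less_Suc_eq)

lemma indicator_word_eq_sum_correlations:
  fixes x :: "nat \<Rightarrow> bool" and w :: "bool list"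
  shows "(if \<forall>j<length w. x (i + j) = w ! j then 1 else 0)
           = (1 / 2) ^ length w * (\<Sum>T\<in>Pow {..<length w}.
               (\<Prod>j\<in>T. if w ! j then -1 else 1) * (\<Prod>j\<in>T. if x (i + j) then -1 else 1 :: real))"
proof -
  let ?a = "\<lambda>j. (if w ! j then -1 else 1) * (if x (i + j) then -1 else 1 :: real)"
  have "(if \<forall>j<length w. x (i + j) = w ! j then 1 else 0) = (\<Prod>j<length w. (?a j + 1) / 2)"
    unfolding indicator_all_eq_prod by (intro prod.cong) auto
  also have "\<dots> = (1 / 2) ^ length w * (\<Prod>j<length w. ?a j + 1)"
    by (simp add: prod_dividef field_simps)
  also have "(\<Prod>j<length w. ?a j + 1) = (\<Sum>T\<in>Pow {..<length w}. \<Prod>j\<in>T. ?a j)"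
    by (subst prod_add) simp_all
  finally show ?thesis
    by (simp add: prod.distrib)
qed

lemma normal_seq_if_correlations_vanish:
  fixes x :: "nat \<Rightarrow> bool"
  assumes corr: "\<And>T. finite T \<Longrightarrow> T \<noteq> {} \<Longrightarrow>
    (\<lambda>N. (\<Sum>i = 1..N. \<Prod>j\<in>T. if x (i + j) then -1 else 1) / N) \<longlonglongrightarrow> (0 :: real)"
  shows "normal_seq x"
  unfolding normal_seq_def
proof
  fix w :: "bool list"
  let ?L = "length w"
  let ?c = "\<lambda>T N. (\<Sum>i = 1..N. \<Prod>j\<in>T. if x (i + j) then -1 else 1 :: real) / N"
  let ?\<sigma> = "\<lambda>T. \<Prod>j\<in>T. if w ! j then -1 else 1 :: real"
  have count: "real (card {i \<in> {1..N}. \<forall>j < ?L. x (i + j) = w ! j}) / N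
                 = (1 / 2) ^ ?L * (\<Sum>T\<in>Pow {..<?L}. ?\<sigma> T * ?c T N)" for N
  proof -
    let ?p = "\<lambda>T i. \<Prod>j\<in>T. if x (i + j) then -1 else 1 :: real"
    have "real (card {i \<in> {1..N}. \<forall>j < ?L. x (i + j) = w ! j})
            = (\<Sum>i = 1..N. if \<forall>j < ?L. x (i + j) = w ! j then 1 else 0)"
      by (simp add: sum.If_cases Int_def conj_commute)
    also have "\<dots> = (1 / 2) ^ ?L * (\<Sum>i = 1..N. \<Sum>T\<in>Pow {..<?L}. ?\<sigma> T * ?p T i)"
      by (simp add: indicator_word_eq_sum_correlations sum_distrib_left)
    also have "\<dots> = (1 / 2) ^ ?L * (\<Sum>T\<in>Pow {..<?L}. ?\<sigma> T * (\<Sum>i = 1..N. ?p T i))"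
      by (subst sum.swap) (simp add: sum_distrib_left)
    finally show ?thesis
      by (simp add: sum_divide_distrib [symmetric] mult.assoc)
  qed
  have "?c T \<longlonglongrightarrow> (if T = {} then 1 else 0)" if "T \<in> Pow {..<?L}" for T
  proof (cases "T = {}")
    case True
    have "\<forall>\<^sub>F N in sequentially. 1 = ?c T N"
      using True by (auto intro: eventually_sequentiallyI)
    with True show ?thesis
      by (auto intro: Lim_transform_eventually)
  next
    case False
    moreover have "finite T"
      using that finite_subset by auto
    ultimately show ?thesis
      using corr by simp
  qed
  then have "(\<lambda>N. (1 / 2) ^ ?L * (\<Sum>T\<in>Pow {..<?L}. ?\<sigma> T * ?c T N))
               \<longlonglongrightarrow> (1 / 2) ^ ?L * (\<Sum>T\<in>Pow {..<?L}. ?\<sigma> T * (if T = {} then 1 else 0))"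
    by (intro tendsto_intros) auto
  also have "(\<Sum>T\<in>Pow {..<?L}. ?\<sigma> T * (if T = {} then 1 else 0)) = 1"
    by (simp add: if_distrib cong: if_cong)
  finally show "(\<lambda>N. real (card {i \<in> {1..N}. \<forall>j < ?L. x (i + j) = w ! j}) / N) \<longlonglongrightarrow> (1 / 2) ^ ?L"
    unfolding count by simp
qed

lemma AE_corr_sum_averages_vanish:
  "AE \<omega> in coin_space. \<forall>T \<in> {T. finite T \<and> T \<noteq> {}}. (\<lambda>N. corr_sum T N \<omega> / N) \<longlonglongrightarrow> 0"
proof (rule AE_ball_countable')
  fix T :: "nat set" assume "T \<in> {T. finite T \<and> T \<noteq> {}}"
  then have "AE \<omega> in coin_space. (\<lambda>m. corr_sum T (Suc m ^ 8) \<omega> / real (Suc m ^ 8)) \<longlonglongrightarrow> 0"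
    by (intro AE_corr_sum_power_subsequence) auto
  then show "AE \<omega> in coin_space. (\<lambda>N. corr_sum T N \<omega> / N) \<longlonglongrightarrow> 0"
    unfolding corr_sum_def
    by (rule eventually_mono) (rule averages_tendsto_zero_if_power_subsequence[where B = 1], auto)
qed (rule countable_subset[OF _ countable_Collect_finite], auto)

theorem mainTheorem1:
  shows "AE \<omega> in coin_space. normal_set (AQ (randQ \<omega>))"
  using AE_corr_sum_averages_vanish
proof (rule eventually_mono)
  fix \<omega> assume vanish: "\<forall>T \<in> {T. finite T \<and> T \<noteq> {}}. (\<lambda>N. corr_sum T N \<omega> / N) \<longlonglongrightarrow> 0"
  have "(\<Sum>i = 1..N. \<Prod>j\<in>T. if i + j \<in> AQ (randQ \<omega>) then -1 else 1) = corr_sum T N \<omega>" for T N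
    unfolding corr_sum_def by (intro sum.cong refl) (simp add: prod_sign_AQ_eq_lambda_coin)
  then show "normal_set (AQ (randQ \<omega>))"
    unfolding normal_set_def using vanish by (intro normal_seq_if_correlations_vanish) auto
qed

end
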